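(* Let $p,q\ge 0$ be integers with $n=p+q\ge 1$, let $Y$ be a metric space, and let $\mathcal{C}(Y;\mathbb{R}_{p,q})$ denote the set of all continuous functions from $Y$ to the Clifford algebra $\mathbb{R}_{p,q}$ (with its topology as a finite-dimensional real vector space). Let $B\subset \mathcal{C}(Y;\mathbb{R}_{p,q})$ be a subset such that $B$ contains the constant function $1$ and $B$ separates the points of $Y$ (for all $x\neq y$ in $Y$ there is $f\in B$ with $f(x)\neq f(y)$). If $n$ is odd, assume in addition that $B$ is stable under the principal automorphism, i.e. $f\in B$ implies $f_*\in B$, where $f_*(y)=(f(y))_*$. Let $A_B(Y;\mathbb{R}_{p,q})$ be the algebra generated by $B$, i.e. the smallest real subalgebra of $\mathcal{C}(Y;\mathbb{R}_{p,q})$ (under pointwise addition and Clifford multiplication) containing $B$ and all constant functions $Y\to\mathbb{R}_{p,q}$. Then $A_B(Y;\mathbb{R}_{p,q})$ is dense in $\mathcal{C}(Y;\mathbb{R}_{p,q})$ for the topology of uniform convergence on compact subsets of $Y$.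
   Context: $\mathbb{R}_{p,q}$ is the universal real Clifford algebra of $\mathbb{R}^n$, $n=p+q$, with basis $\{e_A\}$ indexed by strictly increasing multi-indices $A=(a_1<\dots<a_k)\subset\{1,\dots,n\}$ (with $e_\emptyset=1$, $e_A=e_{a_1}\cdots e_{a_k}$), subject to $e_i^2=1$ for $1\le i\le p$, $e_i^2=-1$ for $p+1\le i\le n$, and $e_ie_j=-e_je_i$ for $i\neq j$. Every $a\in\mathbb{R}_{p,q}$ decomposes as $a=\sum_{k=0}^n\langle a\rangle_k$ with $\langle a\rangle_k=\sum_{|A|=k}a_Ae_A$, $a_A\in\mathbb{R}$. The principal automorphism is $a_*=\sum_{k=0}^n(-1)^k\langle a\rangle_k$. *)

theory Defs
  imports "HOL-Analysis.Analysis"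
begin

text \<open>Elements of the Clifford algebra R_{p,q} (n = p + q) are represented by their
coefficient functions a :: nat set => real, a A being the coefficient of e_A,
with support contained in the multi-indices A \<subseteq> {1..n}.  The function type
carries the product topology, which on the carrier is the usual topology of a
finite-dimensional real vector space.\<close>

type_synonym clif = "nat set \<Rightarrow> real"

definition clif_carrier :: "nat \<Rightarrow> clif set" where
  "clif_carrier n = {a. \<forall>A. A \<notin> Pow {1..n} \<longrightarrow> a A = 0}"

text \<open>Sign in e_A e_B = clif_sign p A B * e_{A \<Delta> B}: reordering sign times the
squares e_i^2 = -1 for common indices i > p.\<close>
definition clif_sign :: "nat \<Rightarrow> nat set \<Rightarrow> nat set \<Rightarrow> real" where
  "clif_sign p A B =
     (-1) ^ card {(i, j). i \<in> A \<and> j \<in> B \<and> j < i} * (-1) ^ card {i \<in> A \<inter> B. p < i}"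

definition clif_mult :: "nat \<Rightarrow> nat \<Rightarrow> clif \<Rightarrow> clif \<Rightarrow> clif" where
  "clif_mult p q a b = (\<lambda>C. \<Sum>A\<in>Pow {1..p+q}. \<Sum>B\<in>Pow {1..p+q}.
      if (A - B) \<union> (B - A) = C then clif_sign p A B * a A * b B else 0)"

definition clif_one :: clif where
  "clif_one = (\<lambda>A. if A = {} then 1 else 0)"

text \<open>Principal automorphism a_* = sum_k (-1)^k <a>_k.\<close>
definition clif_star :: "clif \<Rightarrow> clif" where
  "clif_star a = (\<lambda>A. (-1) ^ card A * a A)"

inductive_set gen_alg :: "nat \<Rightarrow> nat \<Rightarrow> ('a \<Rightarrow> clif) set \<Rightarrow> ('a \<Rightarrow> clif) set"
  for p q :: nat and B :: "('a \<Rightarrow> clif) set" where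
  gen_base: "f \<in> B \<Longrightarrow> f \<in> gen_alg p q B"
| gen_const: "c \<in> clif_carrier (p+q) \<Longrightarrow> (\<lambda>y. c) \<in> gen_alg p q B"
| gen_add: "f \<in> gen_alg p q B \<Longrightarrow> g \<in> gen_alg p q B \<Longrightarrow> (\<lambda>y. (\<lambda>A. f y A + g y A)) \<in> gen_alg p q B"
| gen_scale: "f \<in> gen_alg p q B \<Longrightarrow> (\<lambda>y. (\<lambda>A. r * f y A)) \<in> gen_alg p q B"
| gen_mult: "f \<in> gen_alg p q B \<Longrightarrow> g \<in> gen_alg p q B \<Longrightarrow>
     (\<lambda>y. clif_mult p q (f y) (g y)) \<in> gen_alg p q B"

text \<open>C(Y; R_{p,q}) for Y = UNIV :: 'a.\<close>
definition clif_cont :: "nat \<Rightarrow> ('a::topological_space \<Rightarrow> clif) set" where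
  "clif_cont n = {f. continuous_on UNIV f \<and> (\<forall>y. f y \<in> clif_carrier n)}"

end

theory Submission
  imports Defs
begin

text \<open>For a basis vector e_i, the map a \<mapsto> e_i^-1 a e_i multiplies the e_C-coordinate
of a by (-1)^|C - {i}|, so averaging f with e_i^-1 f e_i keeps exactly the coordinates
with |C - {i}| even.  Doing this for every i leaves only the scalar coordinate and, for odd n,
the pseudoscalar one, which averaging with f_* removes.  As the scalar coordinate of e_S f is
\<plusminus>f_S, the generated algebra contains the scalar embedding of every coordinate f_S of each of
its elements f.  So the real functions whose scalar embedding lies in the algebra form a
point-separating algebra of continuous functions, and the real Stone-Weierstrass theorem
approximates each coordinate.\<close>

definition clif_basis :: "nat set \<Rightarrow> clif" where
  "clif_basis S = (\<lambda>A. if A = S then 1 else 0)"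

definition clif_scalar :: "real \<Rightarrow> clif" where
  "clif_scalar r = (\<lambda>A. if A = {} then r else 0)"

lemma clif_carrier_outside: "a \<in> clif_carrier n \<Longrightarrow> \<not> A \<subseteq> {1..n} \<Longrightarrow> a A = 0"
  unfolding clif_carrier_def by auto

lemma clif_basis_in_carrier: "S \<subseteq> {1..n} \<Longrightarrow> clif_basis S \<in> clif_carrier n"
  unfolding clif_carrier_def clif_basis_def by auto

lemma clif_scalar_in_carrier: "clif_scalar r \<in> clif_carrier n"
  unfolding clif_carrier_def clif_scalar_def by auto

lemma clif_star_in_carrier: "a \<in> clif_carrier n \<Longrightarrow> clif_star a \<in> clif_carrier n"
  unfolding clif_carrier_def clif_star_def by auto

lemma clif_mult_in_carrier: "clif_mult p q a b \<in> clif_carrier (p+q)"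
  unfolding clif_carrier_def clif_mult_def
proof (intro CollectI allI impI)
  fix C assume "C \<notin> Pow {1..p+q}"
  then have "\<And>A B. A \<in> Pow {1..p+q} \<Longrightarrow> B \<in> Pow {1..p+q} \<Longrightarrow> sym_diff A B \<noteq> C" by blast
  then show "(\<Sum>A\<in>Pow {1..p+q}. \<Sum>B\<in>Pow {1..p+q}.
      if sym_diff A B = C then clif_sign p A B * a A * b B else 0) = 0"
    by (intro sum.neutral ballI) auto
qed

lemma clif_mult_outside: "\<not> C \<subseteq> {1..p+q} \<Longrightarrow> clif_mult p q a b C = 0"
  using clif_carrier_outside[OF clif_mult_in_carrier] .

lemma clif_mult_basis_left:
  assumes "S \<subseteq> {1..p+q}" "C \<subseteq> {1..p+q}"
  shows "clif_mult p q (clif_basis S) a C = clif_sign p S (sym_diff S C) * a (sym_diff S C)"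
proof -
  have iff: "sym_diff S B = C \<longleftrightarrow> B = sym_diff S C" for B by blast
  have inner: "(\<Sum>B\<in>Pow {1..p+q}. if sym_diff A B = C then clif_sign p A B * clif_basis S A * a B else 0)
      = (if A = S then (\<Sum>B\<in>Pow {1..p+q}. if B = sym_diff S C then clif_sign p S B * a B else 0)
         else 0)" for A
    by (cases "A = S") (simp_all add: iff clif_basis_def cong: if_cong)
  have "clif_mult p q (clif_basis S) a C = (\<Sum>A\<in>Pow {1..p+q}. if A = S then
      (\<Sum>B\<in>Pow {1..p+q}. if B = sym_diff S C then clif_sign p S B * a B else 0) else 0)"
    unfolding clif_mult_def inner ..
  also have "\<dots> = clif_sign p S (sym_diff S C) * a (sym_diff S C)"
    using assms by (simp add: subset_iff)
  finally show ?thesis .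
qed

lemma clif_mult_basis_right:
  assumes "S \<subseteq> {1..p+q}" "C \<subseteq> {1..p+q}"
  shows "clif_mult p q a (clif_basis S) C = clif_sign p (sym_diff C S) S * a (sym_diff C S)"
proof -
  have "clif_mult p q a (clif_basis S) C = (\<Sum>A\<in>Pow {1..p+q}. \<Sum>B\<in>Pow {1..p+q}.
      if B = S then (if A = sym_diff C S then clif_sign p A S * a A else 0) else 0)"
    unfolding clif_mult_def clif_basis_def by (intro sum.cong refl) auto
  also have "\<dots> = clif_sign p (sym_diff C S) S * a (sym_diff C S)"
    using assms by (simp add: subset_iff)
  finally show ?thesis .
qed

lemma clif_mult_scalar_left:
  assumes "C \<subseteq> {1..p+q}"
  shows "clif_mult p q (clif_scalar r) a C = r * a C"
proof -
  have "clif_scalar r = (\<lambda>A. r * clif_basis {} A)"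
    unfolding clif_scalar_def clif_basis_def by auto
  then have "clif_mult p q (clif_scalar r) a C = r * clif_mult p q (clif_basis {}) a C"
    unfolding clif_mult_def by (simp add: sum_distrib_left algebra_simps if_distrib cong: if_cong)
  also have "\<dots> = r * a C"
    using clif_mult_basis_left[OF empty_subsetI assms] by (simp add: clif_sign_def)
  finally show ?thesis .
qed

lemma clif_mult_scalar_scalar: "clif_mult p q (clif_scalar r) (clif_scalar s) = clif_scalar (r * s)"
proof
  fix C
  show "clif_mult p q (clif_scalar r) (clif_scalar s) C = clif_scalar (r * s) C"
  proof (cases "C \<subseteq> {1..p+q}")
    case True
    then show ?thesis by (simp add: clif_mult_scalar_left) (simp add: clif_scalar_def)
  next
    case False
    then show ?thesis using clif_mult_outside[OF False] by (auto simp: clif_scalar_def)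
  qed
qed

lemma clif_sign_square: "clif_sign p A B * clif_sign p A B = 1"
  unfolding clif_sign_def by (simp add: algebra_simps flip: power_add mult_2)

lemma clif_sign_singleton_left:
  "clif_sign p {i} D = (-1) ^ card {j\<in>D. j < i} * (-1) ^ (if i \<in> D \<and> p < i then 1 else 0)"
proof -
  have pairs: "{(a, b). a \<in> {i} \<and> b \<in> D \<and> b < a} = Pair i ` {j\<in>D. j < i}" by auto
  have squares: "{k \<in> {i} \<inter> D. p < k} = (if i \<in> D \<and> p < i then {i} else {})" by auto
  show ?thesis unfolding clif_sign_def pairs squares by (simp add: card_image inj_on_def)
qed

lemma clif_sign_singleton_right:
  "clif_sign p D {i} = (-1) ^ card {j\<in>D. i < j} * (-1) ^ (if i \<in> D \<and> p < i then 1 else 0)"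
proof -
  have pairs: "{(a, b). a \<in> D \<and> b \<in> {i} \<and> b < a} = (\<lambda>k. (k, i)) ` {j\<in>D. i < j}" by auto
  have squares: "{k \<in> D \<inter> {i}. p < k} = (if i \<in> D \<and> p < i then {i} else {})" by auto
  show ?thesis unfolding clif_sign_def pairs squares by (simp add: card_image inj_on_def)
qed

text \<open>The left-hand side is the factor by which a \<mapsto> e_i^-1 a e_i = e_i^2 e_i a e_i scales the
e_C-coordinate.\<close>

lemma clif_sign_conj_singleton:
  assumes "finite C"
  shows "clif_sign p {i} {i} * (clif_sign p {i} (sym_diff {i} C) * clif_sign p C {i})
    = (-1) ^ card (C - {i})"
proof -
  have below: "{j \<in> sym_diff {i} C. j < i} = {j\<in>C. j < i}" by auto
  have "C - {i} = {j\<in>C. j < i} \<union> {j\<in>C. i < j}" by auto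
  then have card_split: "card (C - {i}) = card {j\<in>C. j < i} + card {j\<in>C. i < j}"
    using assms by (simp add: card_Un_disjoint disjoint_iff)
  have "clif_sign p {i} {i} = (-1) ^ (if p < i then 1 else 0)"
    by (simp add: clif_sign_singleton_left Collect_conv_if)
  moreover have none: "{j. j = i \<and> i < j} = {}" "{j. j = i \<and> j < i} = {}" by auto
  ultimately show ?thesis
    unfolding clif_sign_singleton_left clif_sign_singleton_right below card_split power_add
    by (cases "i \<in> C"; cases "p < i") (simp_all add: algebra_simps none)
qed

lemma minus_one_power_card_sym_diff:
  assumes "finite A" "finite B"
  shows "(-1::'a::comm_ring_1) ^ card (sym_diff A B) = (-1) ^ card A * (-1) ^ card B"
proof -
  have "card (sym_diff A B) = card (A - B) + card (B - A)"
    using assms by (intro card_Un_disjoint) auto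
  moreover have "card A = card (A - B) + card (A \<inter> B)" "card B = card (B - A) + card (A \<inter> B)"
    using assms by (metis Un_Diff_Int card_Un_disjoint finite_Diff finite_Int Int_Diff_disjoint
        inf_commute)+
  moreover have "(-1::'a) ^ card (A \<inter> B) * (-1) ^ card (A \<inter> B) = 1"
    by (simp flip: power_add mult_2)
  ultimately show ?thesis
    by (simp add: power_add algebra_simps)
qed

lemma clif_star_mult: "clif_star (clif_mult p q a b) = clif_mult p q (clif_star a) (clif_star b)"
proof
  fix C
  have "clif_star (clif_mult p q a b) C = (\<Sum>A\<in>Pow {1..p+q}. \<Sum>B\<in>Pow {1..p+q}.
      if sym_diff A B = C then (-1) ^ card (sym_diff A B) * (clif_sign p A B * a A * b B) else 0)"
    unfolding clif_star_def clif_mult_def by (simp add: sum_distrib_left if_distrib cong: if_cong)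
  also have "\<dots> = clif_mult p q (clif_star a) (clif_star b) C"
    unfolding clif_star_def clif_mult_def
    by (intro sum.cong refl) (auto simp: minus_one_power_card_sym_diff finite_subset cong: if_cong)
  finally show "clif_star (clif_mult p q a b) C = clif_mult p q (clif_star a) (clif_star b) C" .
qed

lemma prod_of_bool:
  "finite A \<Longrightarrow> (\<Prod>x\<in>A. of_bool (P x) :: 'a::comm_semiring_1) = of_bool (\<forall>x\<in>A. P x)"
  by (induction A rule: finite_induct) auto

text \<open>Which multi-indices C survive averaging over the conjugations by all e_i, i \<in> N.\<close>

lemma all_even_card_Diff_singleton_iff:
  assumes "finite N" "C \<subseteq> N"
  shows "(\<forall>i\<in>N. even (card (C - {i}))) \<longleftrightarrow> C = {} \<or> C = N \<and> odd (card N)"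
proof
  assume all_even: "\<forall>i\<in>N. even (card (C - {i}))"
  have "finite C" using assms finite_subset by blast
  show "C = {} \<or> C = N \<and> odd (card N)"
  proof (rule ccontr)
    assume C: "\<not> (C = {} \<or> C = N \<and> odd (card N))"
    show False
    proof (cases "even (card C)")
      case True
      from C obtain i where i: "i \<in> C" by blast
      with True \<open>finite C\<close> have "odd (card (C - {i}))"
        by (auto simp: card_Diff_singleton card_gt_0_iff)
      with i assms(2) all_even show False by blast
    next
      case False
      with C have "C \<noteq> N" by auto
      with assms(2) obtain i where "i \<in> N" "i \<notin> C" by blast
      with False all_even show False by auto
    qed
  qed
next
  assume "C = {} \<or> C = N \<and> odd (card N)"
  then show "\<forall>i\<in>N. even (card (C - {i}))"
    using assms by (auto simp: card_Diff_singleton)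
qed

lemma gen_alg_sum:
  assumes "finite I" "\<And>i. i \<in> I \<Longrightarrow> F i \<in> gen_alg p q B"
  shows "(\<lambda>y A. \<Sum>i\<in>I. F i y A) \<in> gen_alg p q B"
  using assms
proof (induction I rule: finite_induct)
  case empty
  have "(\<lambda>y. clif_scalar 0) \<in> gen_alg p q B" by (rule gen_const[OF clif_scalar_in_carrier])
  then show ?case by (simp add: clif_scalar_def)
next
  case (insert i I)
  then show ?case using gen_add[of "F i" p q B "\<lambda>y A. \<Sum>i\<in>I. F i y A"] by simp
qed

lemma gen_alg_mult_const_left:
  "c \<in> clif_carrier (p+q) \<Longrightarrow> f \<in> gen_alg p q B \<Longrightarrow> (\<lambda>y. clif_mult p q c (f y)) \<in> gen_alg p q B"
  using gen_mult[OF gen_const] by blast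

lemma gen_alg_mult_const_right:
  "c \<in> clif_carrier (p+q) \<Longrightarrow> f \<in> gen_alg p q B \<Longrightarrow> (\<lambda>y. clif_mult p q (f y) c) \<in> gen_alg p q B"
  using gen_mult[OF _ gen_const] by blast

lemma gen_alg_star_closed:
  assumes "\<forall>f\<in>B. (\<lambda>y. clif_star (f y)) \<in> B" and "f \<in> gen_alg p q B"
  shows "(\<lambda>y. clif_star (f y)) \<in> gen_alg p q B"
  using assms(2)
proof (induction f rule: gen_alg.induct)
  case (gen_base f)
  then show ?case using assms(1) by (auto intro: gen_alg.gen_base)
next
  case (gen_const c)
  then show ?case by (intro gen_alg.gen_const clif_star_in_carrier)
next
  case (gen_add f g)
  then show ?case
    using gen_alg.gen_add[OF gen_add.IH] by (simp add: clif_star_def algebra_simps)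
next
  case (gen_scale f r)
  then show ?case
    using gen_alg.gen_scale[OF gen_scale.IH, of r] by (simp add: clif_star_def algebra_simps)
next
  case (gen_mult f g)
  then show ?case using gen_alg.gen_mult[OF gen_mult.IH] by (simp add: clif_star_mult)
qed

lemma gen_alg_even_part:
  assumes "\<forall>f\<in>B. (\<lambda>y. clif_star (f y)) \<in> B" and f: "f \<in> gen_alg p q B"
  shows "(\<lambda>y C. of_bool (even (card C)) * f y C) \<in> gen_alg p q B"
proof -
  from gen_scale[OF gen_add[OF f gen_alg_star_closed[OF assms]], of "1/2"]
  have average: "(\<lambda>y A. 1/2 * (f y A + clif_star (f y) A)) \<in> gen_alg p q B"
    by simp
  have "1/2 * (f y A + clif_star (f y) A) = of_bool (even (card A)) * f y A" for y A
    by (cases "even (card A)") (simp_all add: clif_star_def)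
  with average show ?thesis by simp
qed

lemma gen_alg_of_scalar_coordinates:
  assumes "\<And>S. S \<subseteq> {1..p+q} \<Longrightarrow> (\<lambda>y. clif_scalar (G S y)) \<in> gen_alg p q B"
  shows "(\<lambda>y A. if A \<subseteq> {1..p+q} then G A y else 0) \<in> gen_alg p q B"
proof -
  have "(\<lambda>y A. \<Sum>S\<in>Pow {1..p+q}. clif_mult p q (clif_scalar (G S y)) (clif_basis S) A)
      \<in> gen_alg p q B"
    using assms by (intro gen_alg_sum gen_alg_mult_const_right clif_basis_in_carrier) auto
  moreover have "(\<Sum>S\<in>Pow {1..p+q}. clif_mult p q (clif_scalar (G S y)) (clif_basis S) A)
      = (if A \<subseteq> {1..p+q} then G A y else 0)" for y A
  proof (cases "A \<subseteq> {1..p+q}")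
    case True
    then show ?thesis
      by (simp add: clif_mult_scalar_left clif_basis_def if_distrib[of "(*) _"] cong: if_cong)
  qed (simp add: clif_mult_outside)
  ultimately show ?thesis by simp
qed

context
  fixes p q :: nat and B :: "('a \<Rightarrow> clif) set"
  assumes B_carrier: "\<forall>f\<in>B. \<forall>y. f y \<in> clif_carrier (p+q)"
begin

lemma gen_alg_in_carrier: "f \<in> gen_alg p q B \<Longrightarrow> f y \<in> clif_carrier (p+q)"
proof (induction f arbitrary: y rule: gen_alg.induct)
  case (gen_base f)
  then show ?case using B_carrier by auto
next
  case (gen_mult f g)
  then show ?case by (simp add: clif_mult_in_carrier)
qed (auto simp: clif_carrier_def)

lemma gen_alg_conj_average:
  assumes g: "g \<in> gen_alg p q B" and i: "i \<in> {1..p+q}"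
  shows "(\<lambda>y C. of_bool (even (card (C - {i}))) * g y C) \<in> gen_alg p q B"
proof -
  let ?s = "clif_sign p {i} {i}"
  define v where "v y = clif_mult p q (clif_basis {i}) (clif_mult p q (g y) (clif_basis {i}))" for y
  have ib: "{i} \<subseteq> {1..p+q}" using i by auto
  have "v \<in> gen_alg p q B"
    unfolding v_def using g clif_basis_in_carrier[OF ib]
    by (intro gen_alg_mult_const_left gen_alg_mult_const_right)
  from gen_scale[OF gen_add[OF g gen_scale[OF this, of ?s]], of "1/2"]
  have average: "(\<lambda>y A. 1/2 * (g y A + ?s * v y A)) \<in> gen_alg p q B"
    by simp
  have key: "1/2 * (g y C + ?s * v y C) = of_bool (even (card (C - {i}))) * g y C" for y C
  proof (cases "C \<subseteq> {1..p+q}")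
    case True
    have "sym_diff {i} C \<subseteq> {1..p+q}" "sym_diff (sym_diff {i} C) {i} = C"
      using True ib by auto
    then have "v y C = clif_sign p {i} (sym_diff {i} C) * clif_sign p C {i} * g y C"
      unfolding v_def clif_mult_basis_left[OF ib True] using clif_mult_basis_right[OF ib] by simp
    then have "?s * v y C = (-1) ^ card (C - {i}) * g y C"
      using clif_sign_conj_singleton[of C p i] finite_subset[OF True] by (simp add: mult.assoc)
    then show ?thesis by (cases "even (card (C - {i}))") simp_all
  next
    case False
    then show ?thesis
      using clif_carrier_outside[OF gen_alg_in_carrier[OF g]] by (simp add: v_def clif_mult_outside)
  qed
  show ?thesis using average unfolding key .
qed

lemma gen_alg_iterated_conj_average:
  assumes g: "g \<in> gen_alg p q B" and "finite I" "I \<subseteq> {1..p+q}"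
  shows "(\<lambda>y C. (\<Prod>i\<in>I. of_bool (even (card (C - {i})))) * g y C) \<in> gen_alg p q B"
  using assms(2,3)
proof (induction I rule: finite_induct)
  case empty
  then show ?case using g by simp
next
  case (insert i I)
  then show ?case
    using gen_alg_conj_average[of "\<lambda>y C. (\<Prod>i\<in>I. of_bool (even (card (C - {i})))) * g y C" i]
    by (simp add: mult.assoc)
qed

lemma gen_alg_scalar_part:
  assumes "odd (p+q) \<Longrightarrow> \<forall>f\<in>B. (\<lambda>y. clif_star (f y)) \<in> B" and f: "f \<in> gen_alg p q B"
  shows "(\<lambda>y. clif_scalar (f y {})) \<in> gen_alg p q B"
proof -
  let ?N = "{1..p+q}"
  obtain h where h: "h \<in> gen_alg p q B" "\<And>y. h y {} = f y {}"
    and h_pseudoscalar: "\<And>y. odd (p+q) \<Longrightarrow> h y ?N = 0"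
  proof (cases "odd (p+q)")
    case True
    show ?thesis
      by (rule that[OF gen_alg_even_part[OF assms(1)[OF True] f]]) (use True in auto)
  qed (use f in blast)
  have "(\<lambda>y C. (\<Prod>i\<in>?N. of_bool (even (card (C - {i})))) * h y C) \<in> gen_alg p q B"
    by (rule gen_alg_iterated_conj_average[OF h(1)]) auto
  moreover have "(\<Prod>i\<in>?N. of_bool (even (card (C - {i})))) * h y C = clif_scalar (f y {}) C"
    for y C
  proof (cases "C \<subseteq> ?N")
    case True
    then show ?thesis
      using all_even_card_Diff_singleton_iff[OF finite_atLeastAtMost True] h(2) h_pseudoscalar
      by (auto simp: prod_of_bool clif_scalar_def)
  next
    case False
    then show ?thesis
      using clif_carrier_outside[OF gen_alg_in_carrier[OF h(1)]] by (auto simp: clif_scalar_def)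
  qed
  ultimately show ?thesis by simp
qed

lemma gen_alg_scalar_coordinate:
  assumes "odd (p+q) \<Longrightarrow> \<forall>f\<in>B. (\<lambda>y. clif_star (f y)) \<in> B"
    and f: "f \<in> gen_alg p q B" and S: "S \<subseteq> {1..p+q}"
  shows "(\<lambda>y. clif_scalar (f y S)) \<in> gen_alg p q B"
proof -
  let ?g = "\<lambda>y. clif_mult p q (clif_basis S) (f y)"
  have g: "?g \<in> gen_alg p q B"
    by (rule gen_alg_mult_const_left[OF clif_basis_in_carrier[OF S] f])
  have "clif_sign p S S * ?g y {} = f y S" for y
    using clif_mult_basis_left[OF S empty_subsetI] clif_sign_square
    by (simp add: mult.assoc[symmetric])
  then have "clif_sign p S S * clif_scalar (?g y {}) A = clif_scalar (f y S) A" for y A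
    by (simp add: clif_scalar_def)
  with gen_scale[OF gen_alg_scalar_part[OF assms(1) g], of "clif_sign p S S"]
  show ?thesis by simp
qed

end

lemma clif_cont_coordinate: "f \<in> clif_cont n \<Longrightarrow> continuous_on K (\<lambda>y. f y S)"
  unfolding clif_cont_def
  by (auto intro: continuous_on_subset[OF continuous_on_product_then_coordinatewise])

lemma gen_alg_scalar_coordinates_separate:
  assumes B: "B \<subseteq> clif_cont (p+q)"
    and star: "odd (p+q) \<Longrightarrow> \<forall>f\<in>B. (\<lambda>y. clif_star (f y)) \<in> B"
    and F: "F \<in> B" "F x \<noteq> F y"
  shows "\<exists>h. continuous_on K h \<and> (\<lambda>z. clif_scalar (h z)) \<in> gen_alg p q B \<and> h x \<noteq> h y"
proof -
  have B_carrier: "\<forall>f\<in>B. \<forall>y. f y \<in> clif_carrier (p+q)"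
    using B unfolding clif_cont_def by auto
  from F(2) obtain S where S: "F x S \<noteq> F y S" by (meson ext)
  have "S \<subseteq> {1..p+q}"
  proof (rule ccontr)
    assume "\<not> S \<subseteq> {1..p+q}"
    then have "F x S = 0" "F y S = 0"
      using B_carrier F(1) clif_carrier_outside by blast+
    with S show False by simp
  qed
  then have "(\<lambda>z. clif_scalar (F z S)) \<in> gen_alg p q B"
    using gen_alg_scalar_coordinate[OF B_carrier star gen_base[OF F(1)]] by blast
  moreover have "continuous_on K (\<lambda>z. F z S)"
    using B F(1) by (intro clif_cont_coordinate) blast
  ultimately show ?thesis
    using S by (intro exI[of _ "\<lambda>z. F z S"]) simp
qed

lemma gen_alg_scalar_dense:
  fixes B :: "('a::t2_space \<Rightarrow> clif) set"
  assumes B: "B \<subseteq> clif_cont (p+q)"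
    and separating: "\<forall>x y. x \<noteq> y \<longrightarrow> (\<exists>f\<in>B. f x \<noteq> f y)"
    and star: "odd (p+q) \<Longrightarrow> \<forall>f\<in>B. (\<lambda>y. clif_star (f y)) \<in> B"
    and "compact K" "continuous_on K \<phi>" "\<epsilon> > 0"
  shows "\<exists>h. (\<lambda>y. clif_scalar (h y)) \<in> gen_alg p q B \<and> (\<forall>x\<in>K. \<bar>\<phi> x - h x\<bar> < \<epsilon>)"
proof -
  define P where "P h \<longleftrightarrow> continuous_on K h \<and> (\<lambda>y. clif_scalar (h y)) \<in> gen_alg p q B" for h
  have "\<exists>h. P h \<and> (\<forall>x\<in>K. \<bar>\<phi> x - h x\<bar> < \<epsilon>)"
  proof (rule Stone_Weierstrass_HOL[of K P])
    show "P (\<lambda>x. c)" for c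
      unfolding P_def by (simp add: gen_const clif_scalar_in_carrier)
    show "P (\<lambda>x. h x + k x)" if "P h \<and> P k" for h k
    proof -
      have "clif_scalar (h y) A + clif_scalar (k y) A = clif_scalar (h y + k y) A" for y A
        by (simp add: clif_scalar_def)
      with that gen_add[of "\<lambda>y. clif_scalar (h y)" p q B "\<lambda>y. clif_scalar (k y)"]
      show ?thesis using continuous_on_add[of K h k] unfolding P_def by simp
    qed
    show "P (\<lambda>x. h x * k x)" if "P h \<and> P k" for h k
      using that gen_mult[of "\<lambda>y. clif_scalar (h y)" p q B "\<lambda>y. clif_scalar (k y)"]
      using continuous_on_mult[of K h k] unfolding P_def clif_mult_scalar_scalar by simp
    show "\<exists>h. P h \<and> h x \<noteq> h y" if "x \<in> K \<and> y \<in> K \<and> x \<noteq> y" for x y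
    proof -
      from that have "x \<noteq> y" by simp
      with separating obtain F where "F \<in> B" "F x \<noteq> F y" by blast
      from gen_alg_scalar_coordinates_separate[OF B star this] show ?thesis
        unfolding P_def by blast
    qed
    show "continuous_on K h" if "P h" for h
      using that unfolding P_def by simp
  qed (use assms in auto)
  then show ?thesis unfolding P_def by blast
qed

theorem theorem3:
  fixes p q :: nat and B :: "('a::metric_space \<Rightarrow> clif) set"
  assumes "p + q \<ge> 1"
    and "B \<subseteq> clif_cont (p+q)"
    and "(\<lambda>y. clif_one) \<in> B"
    and "\<forall>x y. x \<noteq> y \<longrightarrow> (\<exists>f\<in>B. f x \<noteq> f y)"
    and "odd (p+q) \<Longrightarrow> (\<forall>f\<in>B. (\<lambda>y. clif_star (f y)) \<in> B)"
  shows "\<forall>f \<in> clif_cont (p+q). \<forall>K. compact K \<longrightarrow> (\<forall>\<epsilon>>0.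
           \<exists>g \<in> gen_alg p q B. \<forall>y\<in>K. \<forall>A. \<bar>f y A - g y A\<bar> < \<epsilon>)"
proof (intro ballI allI impI)
  fix f :: "'a \<Rightarrow> clif" and K :: "'a set" and \<epsilon> :: real
  assume f: "f \<in> clif_cont (p+q)" and "compact K" "\<epsilon> > 0"
  have "\<forall>S. \<exists>h. (\<lambda>y. clif_scalar (h y)) \<in> gen_alg p q B \<and> (\<forall>x\<in>K. \<bar>f x S - h x\<bar> < \<epsilon>)"
    using gen_alg_scalar_dense[OF assms(2,4,5) \<open>compact K\<close> clif_cont_coordinate[OF f]] \<open>\<epsilon> > 0\<close>
    by blast
  then obtain G where G: "\<And>S. (\<lambda>y. clif_scalar (G S y)) \<in> gen_alg p q B"
    "\<And>S x. x \<in> K \<Longrightarrow> \<bar>f x S - G S x\<bar> < \<epsilon>"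
    by metis
  let ?g = "\<lambda>y A. if A \<subseteq> {1..p+q} then G A y else 0"
  show "\<exists>g \<in> gen_alg p q B. \<forall>y\<in>K. \<forall>A. \<bar>f y A - g y A\<bar> < \<epsilon>"
  proof (intro bexI ballI allI)
    show "?g \<in> gen_alg p q B"
      using G(1) by (rule gen_alg_of_scalar_coordinates)
    show "\<bar>f y A - ?g y A\<bar> < \<epsilon>" if "y \<in> K" for y A
      using G(2)[OF that] clif_carrier_outside[of "f y" "p+q" A] f \<open>\<epsilon> > 0\<close>
      by (auto simp: clif_cont_def)
  qed
qed

end
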